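(* Let $k\ge1$ and $n$ be integers. For the graph $G(n,k)$ the following are equivalent: (A) $G(n,k)$ has no cycles; (B) both $k-1$ and $(n-3)_{k+1}$ lie in the tail; (C) both $0$ and $(n-1)_{k+1}$ lie in the tail; (D) both $0$ and $k-1$ lie in the tail.
   Context: For an integer $\ell$, $\ell_k$ and $\ell_{k+1}$ denote the least nonnegative residues of $\ell$ modulo $k$ and $k+1$. $G(n,k)$ is the directed graph on vertices $0,1,\dots,k$ whose edges are exactly the $k$ edges $(i+n-2)_{k+1}\to(i+n-1)_k$, $1\le i\le k$; a loop $a\to a$ counts as a cycle. Vertex $k$ has in-degree $0$, vertex $(n-2)_{k+1}$ has out-degree $0$, and all other vertices have in- and out-degree $1$, so $G(n,k)$ is a disjoint union of directed cycles and one directed path, the tail, from $k$ to $(n-2)_{k+1}$ (consisting of the single vertex $k$ if $k=(n-2)_{k+1}$). *)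

theory Defs
  imports Main
begin

definition Gedges :: "int \<Rightarrow> int \<Rightarrow> (int \<times> int) set" where
  "Gedges n k = {((i + n - 2) mod (k + 1), (i + n - 1) mod k) | i. 1 \<le> i \<and> i \<le> k}"

definition has_cycle :: "int \<Rightarrow> int \<Rightarrow> bool" where
  "has_cycle n k \<longleftrightarrow> (\<exists>v. (v, v) \<in> (Gedges n k)\<^sup>+)"

definition tail :: "int \<Rightarrow> int \<Rightarrow> int set" where
  "tail n k = {v. (k, v) \<in> (Gedges n k)\<^sup>* \<and> (v, (n - 2) mod (k + 1)) \<in> (Gedges n k)\<^sup>*}"

end

theory Submission
  imports Defs
begin

(* Every vertex v other than the sink (n-2) mod (k+1) has exactly one out-edge, to succ v, and
   succ is injective there, so a vertex on a cycle has only cycle vertices as successors and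
   cannot lie on the tail. If there is no cycle, following out-edges from any vertex ends in the
   sink and following in-edges ends in k, so every vertex lies on the tail.

   Conversely, adding 1 to both ends of an edge u -> succ u gives an edge unless u + 1 is the
   sink or succ u = k - 1. Hence if k - 1 and the vertex (n-3) mod (k+1) before the sink are off
   all cycles, the finite set of cycle vertices is closed under v |-> v + 1 and so empty; the
   same argument with v |-> v - 1 handles 0 and the vertex (n-1) mod (k+1) after the sink. If 0
   and k - 1 are off all cycles but both neighbours p, q of the sink are on cycles, then succ
   maps the set P of cycle vertices u with u + 1 also on a cycle injectively into itself, hence
   onto itself; but succ q = succ p + 1 puts succ p into P, so p is in P and the sink p + 1
   would be on a cycle. *)

lemma rtrancl_to_target_if_acyclic:
  assumes "finite R" "acyclic R" "x \<in> S"
    and "\<And>y. y \<in> S \<Longrightarrow> y \<noteq> t \<Longrightarrow> \<exists>z\<in>S. (y, z) \<in> R"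
  shows "(x, t) \<in> R\<^sup>*"
  using finite_acyclic_wf_converse[OF assms(1,2)] assms(3)
proof (induction x rule: wf_induct_rule)
  case (less x)
  show ?case
  proof (cases "x = t")
    case False
    then obtain z where z: "z \<in> S" "(x, z) \<in> R" using assms(4)[OF less.prems] by blast
    then have "(z, t) \<in> R\<^sup>*" using less.IH by simp
    with z(2) show ?thesis by (rule converse_rtrancl_into_rtrancl)
  qed simp
qed

lemma single_valued_cycle_rtrancl:
  assumes "single_valued R" "(x, y) \<in> R\<^sup>*" "(x, x) \<in> R\<^sup>+"
  shows "(y, y) \<in> R\<^sup>+"
  using assms(2,3)
proof (induction rule: rtrancl_induct)
  case (step y z)
  obtain w where "(y, w) \<in> R" "(w, y) \<in> R\<^sup>*"
    using tranclD[OF step.IH[OF step.prems]] by blast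
  then have "(z, y) \<in> R\<^sup>*"
    using single_valuedD[OF assms(1) step.hyps(2)] by simp
  then show ?case using step.hyps(2) by (rule rtrancl_into_trancl1)
qed

lemma trancl_map_closed:
  assumes closed: "\<And>x y. x \<in> C \<Longrightarrow> (x, y) \<in> R \<Longrightarrow> y \<in> C"
    and map: "\<And>x y. x \<in> C \<Longrightarrow> (x, y) \<in> R \<Longrightarrow> (g x, g y) \<in> R"
    and "(x, y) \<in> R\<^sup>+" "x \<in> C"
  shows "(g x, g y) \<in> R\<^sup>+"
proof -
  from \<open>(x, y) \<in> R\<^sup>+\<close> have "(g x, g y) \<in> R\<^sup>+ \<and> y \<in> C"
  proof (induction rule: trancl_induct)
    case (base y)
    then show ?case using closed[OF \<open>x \<in> C\<close>] map[OF \<open>x \<in> C\<close>] by blast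
  next
    case (step y z)
    then have "y \<in> C" "(g x, g y) \<in> R\<^sup>+" by simp_all
    then show ?case using closed[OF _ step(2)] map[OF _ step(2)] trancl_into_trancl by metis
  qed
  then show ?thesis ..
qed

lemma finite_translation_closed_empty:
  fixes A :: "int set"
  assumes "finite A" "d \<noteq> 0" "\<And>x. x \<in> A \<Longrightarrow> x + d \<in> A"
  shows "A = {}"
proof
  show "A \<subseteq> {}"
  proof
    fix x assume "x \<in> A"
    have "x + int j * d \<in> A" for j
    proof (induction j)
      case (Suc j)
      then show ?case using assms(3)[OF Suc] by (simp add: algebra_simps)
    qed (use \<open>x \<in> A\<close> in simp)
    then have "range (\<lambda>j. x + int j * d) \<subseteq> A" by auto
    then have "finite (range (\<lambda>j. x + int j * d))" using assms(1) by (rule finite_subset)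
    moreover have "inj (\<lambda>j. x + int j * d)" using assms(2) by (intro injI) simp
    ultimately have "finite (UNIV :: nat set)" by (rule finite_imageD)
    then show "x \<in> {}" by simp
  qed
qed simp

lemma mem_if_image_mem_invariant:
  assumes "finite P" "f ` P \<subseteq> P" "inj_on f (insert x P)" "f x \<in> P"
  shows "x \<in> P"
proof -
  have "f ` P = P" using endo_inj_surj assms(1,2) inj_on_subset[OF assms(3)] by blast
  then obtain u where "u \<in> P" "f x = f u" using assms(4) by blast
  then show ?thesis using assms(3) by (metis inj_on_eq_iff insertCI)
qed

locale G_graph =
  fixes n k :: int
  assumes k_pos: "1 \<le> k"
begin

abbreviation E :: "(int \<times> int) set" where "E \<equiv> Gedges n k"

definition sink :: int where "sink = (n - 2) mod (k + 1)"

text \<open>A vertex \<open>a \<noteq> sink\<close> is the source of the edge with index \<open>i = label a + 1\<close>;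
  \<open>label\<close> is a bijection of \<open>{0..k}\<close> sending the sink to \<open>k\<close>.\<close>
definition label :: "int \<Rightarrow> int" where "label v = (v - n + 1) mod (k + 1)"

definition succ :: "int \<Rightarrow> int" where "succ v = (label v + n) mod k"

lemma label_bounds: "0 \<le> label v" "label v \<le> k"
  using k_pos pos_mod_bound[of "k + 1" "v - n + 1"] by (simp_all add: label_def)

lemma succ_bounds: "0 \<le> succ v" "succ v < k"
  using k_pos by (simp_all add: succ_def)

lemma label_vertex: "label ((j + n - 1) mod (k + 1)) = j mod (k + 1)"
proof -
  have "label ((j + n - 1) mod (k + 1)) = ((j + n - 1) mod (k + 1) - (n - 1)) mod (k + 1)"
    by (simp add: label_def algebra_simps)
  also have "\<dots> = j mod (k + 1)" by (simp add: mod_diff_left_eq)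
  finally show ?thesis .
qed

lemma label_eq_iff:
  assumes "0 \<le> v" "v \<le> k"
  shows "label v = label c \<longleftrightarrow> v = c mod (k + 1)"
proof -
  have "label v = label c \<longleftrightarrow> v mod (k + 1) = c mod (k + 1)"
    by (simp add: label_def mod_eq_dvd_iff)
  then show ?thesis using assms by simp
qed

lemma label_sink: "label sink = k"
  using label_vertex[of "-1"] k_pos by (simp add: sink_def zmod_minus1)

lemma label_eq_k_iff: "0 \<le> v \<Longrightarrow> v \<le> k \<Longrightarrow> label v = k \<longleftrightarrow> v = sink"
  using label_eq_iff[of v sink] label_sink by (simp add: sink_def)

lemma label_inj: "0 \<le> a \<Longrightarrow> a \<le> k \<Longrightarrow> 0 \<le> b \<Longrightarrow> b \<le> k \<Longrightarrow> label a = label b \<Longrightarrow> a = b"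
  using label_eq_iff[of a b] by simp

lemma Gedges_iff: "(a, b) \<in> E \<longleftrightarrow> 0 \<le> a \<and> a \<le> k \<and> a \<noteq> sink \<and> b = succ a"
proof
  assume "(a, b) \<in> E"
  then obtain i where i: "1 \<le> i" "i \<le> k" "a = (i + n - 2) mod (k + 1)" "b = (i + n - 1) mod k"
    unfolding Gedges_def by blast
  have label_a: "label a = i - 1" using label_vertex[of "i - 1"] i by (simp add: algebra_simps)
  have "0 \<le> a" "a \<le> k" using i(3) k_pos pos_mod_bound[of "k + 1" "i + n - 2"] by simp_all
  moreover have "a \<noteq> sink" using label_a label_sink i(2) by auto
  moreover have "b = succ a" unfolding succ_def label_a using i(4) by (simp add: algebra_simps)
  ultimately show "0 \<le> a \<and> a \<le> k \<and> a \<noteq> sink \<and> b = succ a" by blast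
next
  assume a: "0 \<le> a \<and> a \<le> k \<and> a \<noteq> sink \<and> b = succ a"
  define i where "i = label a + 1"
  have i: "1 \<le> i" "i \<le> k"
    using label_bounds[of a] label_eq_k_iff[of a] a by (auto simp: i_def)
  have "label ((i + n - 2) mod (k + 1)) = label a"
    using label_vertex[of "label a"] label_bounds[of a] by (simp add: i_def algebra_simps)
  then have "a = (i + n - 2) mod (k + 1)"
    using label_inj a k_pos pos_mod_bound[of "k + 1" "i + n - 2"] by simp
  moreover have "b = (i + n - 1) mod k" using a unfolding i_def succ_def by (simp add: algebra_simps)
  ultimately show "(a, b) \<in> E" unfolding Gedges_def using i by blast
qed

lemma finite_Gedges: "finite E"
  by (rule finite_subset[of _ "{0..k} \<times> {0..<k}"]) (auto simp: Gedges_iff succ_bounds)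

lemma single_valued_Gedges: "single_valued E"
  by (auto simp: single_valued_def Gedges_iff)

lemma in_edge_exists:
  assumes "0 \<le> b" "b < k"
  shows "\<exists>a \<in> {0..k}. (a, b) \<in> E"
proof -
  define a where "a = ((b - n) mod k + n - 1) mod (k + 1)"
  have a: "0 \<le> a" "a \<le> k" using k_pos pos_mod_bound[of "k + 1"] by (auto simp: a_def)
  have "0 \<le> (b - n) mod k" "(b - n) mod k < k" using k_pos by simp_all
  then have label_a: "label a = (b - n) mod k"
    using label_vertex[of "(b - n) mod k"] by (simp add: a_def)
  then have "a \<noteq> sink" using \<open>(b - n) mod k < k\<close> label_sink by auto
  moreover have "succ a = b" using label_a assms by (simp add: succ_def mod_add_left_eq)
  ultimately show ?thesis using a by (auto simp: Gedges_iff)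
qed

lemma succ_inj_on: "inj_on succ ({0..k} - {sink})"
proof (rule inj_onI)
  fix a b assume ab: "a \<in> {0..k} - {sink}" "b \<in> {0..k} - {sink}" "succ a = succ b"
  have "label a < k" "label b < k"
    using ab label_bounds label_eq_k_iff by (auto simp: le_less)
  moreover have "label a mod k = label b mod k"
    using ab(3) by (simp add: succ_def mod_eq_dvd_iff)
  ultimately have "label a = label b" using label_bounds by simp
  then show "a = b" using ab label_inj by auto
qed

lemma succ_step:
  assumes "label b mod k = (label a + 1) mod k"
  shows "succ b = (succ a + 1) mod k"
proof -
  have "succ b = (label b mod k + n) mod k" by (simp add: succ_def mod_simps)
  also have "\<dots> = ((label a + 1) mod k + n) mod k" using assms by simp
  also have "\<dots> = (succ a + 1) mod k" by (simp add: succ_def mod_simps ac_simps)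
  finally show ?thesis .
qed

text \<open>The vertices before and after the sink are the sources of the last and the first edge.\<close>
lemma succ_around_sink: "succ ((n - 1) mod (k + 1)) = (succ ((n - 3) mod (k + 1)) + 1) mod k"
proof -
  have "(-2) mod (k + 1) = (k - 1 + (k + 1) * (-1)) mod (k + 1)" by simp
  also have "\<dots> = k - 1" using k_pos by (simp only: mod_mult_self2) simp
  finally have "label ((n - 3) mod (k + 1)) = k - 1" "label ((n - 1) mod (k + 1)) = 0"
    using label_vertex[of "-2"] label_vertex[of 0] by simp_all
  then show ?thesis by (intro succ_step) simp
qed

lemma edge_shift:
  assumes "0 \<le> a" "a + 1 \<le> k" "a \<noteq> sink" "a + 1 \<noteq> sink" "0 \<le> b" "b + 1 < k"
  shows "(a, b) \<in> E \<longleftrightarrow> (a + 1, b + 1) \<in> E"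
proof -
  have "label a < k" using assms label_bounds[of a] label_eq_k_iff[of a] by (auto simp: le_less)
  have "label (a + 1) = ((a - n + 1) + 1) mod (k + 1)" by (simp add: label_def algebra_simps)
  also have "\<dots> = (label a + 1) mod (k + 1)" by (simp add: label_def mod_add_left_eq)
  also have "\<dots> = label a + 1" using \<open>label a < k\<close> label_bounds[of a] by simp
  finally have "succ (a + 1) = (succ a + 1) mod k" by (intro succ_step) simp
  then have "succ a = b \<longleftrightarrow> succ (a + 1) = b + 1"
    using succ_bounds[of a] assms(5,6) by (cases "succ a = k - 1") auto
  then show ?thesis using assms by (auto simp: Gedges_iff)
qed

definition on_cycle :: "int \<Rightarrow> bool" where "on_cycle v \<longleftrightarrow> (v, v) \<in> E\<^sup>+"

lemma has_cycle_iff: "has_cycle n k \<longleftrightarrow> (\<exists>v. on_cycle v)"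
  by (simp add: has_cycle_def on_cycle_def)

lemma on_cycle_bounds:
  assumes "on_cycle v"
  shows "0 \<le> v" "v < k" "v \<noteq> sink"
proof -
  have "(v, v) \<in> E\<^sup>+" using assms by (simp add: on_cycle_def)
  then obtain u w where "(v, w) \<in> E" "(u, v) \<in> E" by (meson tranclD tranclD2)
  then show "0 \<le> v" "v < k" "v \<noteq> sink" using succ_bounds by (auto simp: Gedges_iff)
qed

lemma on_cycle_rtrancl:
  assumes "on_cycle v" "(v, w) \<in> E\<^sup>*"
  shows "on_cycle w"
  using single_valued_cycle_rtrancl[OF single_valued_Gedges assms(2)] assms(1)
  by (simp add: on_cycle_def)

lemma on_cycle_succ:
  assumes "on_cycle v"
  shows "on_cycle (succ v)"
proof -
  have "(v, succ v) \<in> E" using on_cycle_bounds[OF assms] by (simp add: Gedges_iff)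
  then show ?thesis using on_cycle_rtrancl[OF assms] by blast
qed

lemma on_cycle_not_in_tail:
  assumes "on_cycle v"
  shows "v \<notin> tail n k"
proof
  assume "v \<in> tail n k"
  then have "(v, sink) \<in> E\<^sup>*" by (simp add: tail_def sink_def)
  then have "on_cycle sink" by (rule on_cycle_rtrancl[OF assms])
  then show False using on_cycle_bounds(3) by blast
qed

lemma in_tail_if_no_cycle:
  assumes "\<not> has_cycle n k" "0 \<le> v" "v \<le> k"
  shows "v \<in> tail n k"
proof -
  have acyclic: "acyclic E" using assms(1) by (simp add: acyclic_def has_cycle_def)
  have "(v, sink) \<in> E\<^sup>*"
    by (rule rtrancl_to_target_if_acyclic[OF finite_Gedges acyclic, of v "{0..k}"])
      (use assms succ_bounds less_imp_le[OF succ_bounds(2)] in \<open>auto simp: Gedges_iff\<close>)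
  moreover have "(v, k) \<in> (E\<inverse>)\<^sup>*"
  proof (rule rtrancl_to_target_if_acyclic)
    show "finite (E\<inverse>)" "acyclic (E\<inverse>)" "v \<in> {0..k}"
      using finite_Gedges acyclic assms by simp_all
    fix y assume "y \<in> {0..k}" "y \<noteq> k"
    then show "\<exists>z\<in>{0..k}. (y, z) \<in> E\<inverse>" using in_edge_exists[of y] by auto
  qed
  ultimately show ?thesis by (simp add: tail_def sink_def rtrancl_converse)
qed

lemma no_cycle_if_translation_closed:
  assumes "d \<noteq> 0" and shift: "\<And>v. on_cycle v \<Longrightarrow> (v + d, succ v + d) \<in> E"
  shows "\<not> on_cycle v"
proof -
  have "on_cycle (v + d)" if "on_cycle v" for v
    using trancl_map_closed[of "Collect on_cycle" E "\<lambda>x. x + d" v v] that shift on_cycle_succ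
    by (auto simp: on_cycle_def[symmetric] Gedges_iff)
  moreover have "finite (Collect on_cycle)"
    by (rule finite_subset[of _ "{0..k}"]) (auto simp: on_cycle_bounds(1) less_imp_le[OF on_cycle_bounds(2)])
  ultimately have "Collect on_cycle = {}"
    using finite_translation_closed_empty assms(1) by blast
  then show ?thesis by blast
qed

lemma before_sink_iff: "0 \<le> v \<Longrightarrow> v < k \<Longrightarrow> v = (n - 3) mod (k + 1) \<longleftrightarrow> v + 1 = sink"
proof -
  assume "0 \<le> v" "v < k"
  have "v mod (k + 1) = (n - 3) mod (k + 1) \<longleftrightarrow> (v + 1) mod (k + 1) = (n - 2) mod (k + 1)"
    by (simp add: mod_eq_dvd_iff algebra_simps)
  then show ?thesis using \<open>0 \<le> v\<close> \<open>v < k\<close> by (simp add: sink_def)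
qed

lemma after_sink_iff: "0 < v \<Longrightarrow> v \<le> k \<Longrightarrow> v = (n - 1) mod (k + 1) \<longleftrightarrow> v - 1 = sink"
proof -
  assume "0 < v" "v \<le> k"
  have "v mod (k + 1) = (n - 1) mod (k + 1) \<longleftrightarrow> (v - 1) mod (k + 1) = (n - 2) mod (k + 1)"
    by (simp add: mod_eq_dvd_iff algebra_simps)
  then show ?thesis using \<open>0 < v\<close> \<open>v \<le> k\<close> by (simp add: sink_def)
qed

lemma no_cycle_if_top_and_before_sink_off_cycle:
  assumes "\<not> on_cycle (k - 1)" "\<not> on_cycle ((n - 3) mod (k + 1))"
  shows "\<not> on_cycle v"
proof (rule no_cycle_if_translation_closed[of 1])
  fix v assume v: "on_cycle v"
  then have bounds: "0 \<le> v" "v < k" "v \<noteq> sink" by (rule on_cycle_bounds)+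
  have "v + 1 < k" using v bounds assms(1) by (cases "v = k - 1") auto
  moreover have "v + 1 \<noteq> sink" using before_sink_iff[of v] v bounds assms(2) by auto
  moreover have "succ v + 1 < k"
    using on_cycle_succ[OF v] assms(1) succ_bounds[of v] by (cases "succ v = k - 1") auto
  moreover have "(v, succ v) \<in> E" using bounds by (simp add: Gedges_iff)
  ultimately show "(v + 1, succ v + 1) \<in> E"
    using edge_shift[of v "succ v"] bounds succ_bounds[of v] by simp
qed simp

lemma no_cycle_if_bottom_and_after_sink_off_cycle:
  assumes "\<not> on_cycle 0" "\<not> on_cycle ((n - 1) mod (k + 1))"
  shows "\<not> on_cycle v"
proof (rule no_cycle_if_translation_closed[of "-1"])
  fix v assume v: "on_cycle v"
  then have bounds: "0 \<le> v" "v < k" "v \<noteq> sink" by (rule on_cycle_bounds)+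
  have "0 < v" using v bounds assms(1) by (cases "v = 0") auto
  moreover have "v - 1 \<noteq> sink" using after_sink_iff[of v] v bounds assms(2) \<open>0 < v\<close> by auto
  moreover have "0 < succ v"
    using on_cycle_succ[OF v] assms(1) succ_bounds[of v] by (cases "succ v = 0") auto
  moreover have "(v, succ v) \<in> E" using bounds by (simp add: Gedges_iff)
  ultimately show "(v + - 1, succ v + - 1) \<in> E"
    using edge_shift[of "v - 1" "succ v - 1"] bounds succ_bounds[of v] by simp
qed simp

lemma no_cycle_if_bottom_and_top_off_cycle:
  assumes "\<not> on_cycle 0" "\<not> on_cycle (k - 1)"
  shows "\<not> on_cycle v"
proof
  assume "on_cycle v"
  define p where "p = (n - 3) mod (k + 1)"
  define q where "q = (n - 1) mod (k + 1)"
  have p: "on_cycle p"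
    using no_cycle_if_top_and_before_sink_off_cycle assms(2) \<open>on_cycle v\<close> by (auto simp: p_def)
  have q: "on_cycle q"
    using no_cycle_if_bottom_and_after_sink_off_cycle assms(1) \<open>on_cycle v\<close> by (auto simp: q_def)
  have succ_not_top: "succ u + 1 < k" if "on_cycle u" for u
    using on_cycle_succ[OF that] assms(2) succ_bounds[of u] by (cases "succ u = k - 1") auto
  define P where "P = {u. on_cycle u \<and> on_cycle (u + 1)}"
  have succ_plus_one: "succ (u + 1) = succ u + 1" if "u \<in> P" for u
  proof -
    have u: "on_cycle u" "on_cycle (u + 1)" using that by (simp_all add: P_def)
    then have "(u + 1, succ u + 1) \<in> E"
      using edge_shift[of u "succ u"] on_cycle_bounds[OF u(1)] on_cycle_bounds[OF u(2)]
        succ_not_top[OF u(1)] succ_bounds[of u] by (simp add: Gedges_iff)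
    then show ?thesis by (simp add: Gedges_iff)
  qed
  have invariant: "succ ` P \<subseteq> P"
  proof
    fix w assume "w \<in> succ ` P"
    then obtain u where u: "u \<in> P" "w = succ u" by blast
    then have "on_cycle (succ u)" "on_cycle (succ (u + 1))" using on_cycle_succ by (simp_all add: P_def)
    then show "w \<in> P" using succ_plus_one[OF u(1)] u(2) by (simp add: P_def)
  qed
  have vertices: "insert p P \<subseteq> {0..k} - {sink}"
    using p on_cycle_bounds by (force simp: P_def)
  then have "finite P" using finite_subset[of P "{0..k}"] by auto
  moreover note invariant
  moreover have "inj_on succ (insert p P)" using inj_on_subset[OF succ_inj_on vertices] .
  moreover have "succ p \<in> P"
  proof -
    have "succ q = succ p + 1"
      using succ_around_sink succ_not_top[OF p] succ_bounds[of p] by (simp add: p_def q_def)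
    then show ?thesis using on_cycle_succ[OF p] on_cycle_succ[OF q] by (simp add: P_def)
  qed
  ultimately have "p \<in> P" by (rule mem_if_image_mem_invariant)
  moreover have "p + 1 = sink" using before_sink_iff[of p] on_cycle_bounds[OF p] by (simp add: p_def)
  ultimately have "on_cycle sink" by (simp add: P_def)
  then show False using on_cycle_bounds(3) by blast
qed

lemma no_cycle_iff_in_tail:
  assumes "0 \<le> x" "x \<le> k" "0 \<le> y" "y \<le> k"
    and "\<And>v. \<not> on_cycle x \<Longrightarrow> \<not> on_cycle y \<Longrightarrow> \<not> on_cycle v"
  shows "\<not> has_cycle n k \<longleftrightarrow> x \<in> tail n k \<and> y \<in> tail n k"
proof
  assume "\<not> has_cycle n k"
  then show "x \<in> tail n k \<and> y \<in> tail n k" using in_tail_if_no_cycle assms(1-4) by blast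
next
  assume "x \<in> tail n k \<and> y \<in> tail n k"
  then have "\<not> on_cycle x" "\<not> on_cycle y" using on_cycle_not_in_tail by auto
  then show "\<not> has_cycle n k" using assms(5) has_cycle_iff by blast
qed

end

theorem lemma3p7:
  fixes n k :: int
  assumes "k \<ge> 1"
  shows "(\<not> has_cycle n k \<longleftrightarrow> k - 1 \<in> tail n k \<and> (n - 3) mod (k + 1) \<in> tail n k)
       \<and> (\<not> has_cycle n k \<longleftrightarrow> 0 \<in> tail n k \<and> (n - 1) mod (k + 1) \<in> tail n k)
       \<and> (\<not> has_cycle n k \<longleftrightarrow> 0 \<in> tail n k \<and> k - 1 \<in> tail n k)"
proof -
  interpret G_graph n k using assms by unfold_locales
  have bounds: "0 \<le> (n - 3) mod (k + 1)" "(n - 3) mod (k + 1) \<le> k"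
    "0 \<le> (n - 1) mod (k + 1)" "(n - 1) mod (k + 1) \<le> k" "0 \<le> k - 1" "k - 1 \<le> k" "0 \<le> k"
    using assms pos_mod_bound[of "k + 1"] by (simp_all add: less_imp_le)
  have "\<not> has_cycle n k \<longleftrightarrow> k - 1 \<in> tail n k \<and> (n - 3) mod (k + 1) \<in> tail n k"
    by (rule no_cycle_iff_in_tail) (use bounds no_cycle_if_top_and_before_sink_off_cycle in auto)
  moreover have "\<not> has_cycle n k \<longleftrightarrow> 0 \<in> tail n k \<and> (n - 1) mod (k + 1) \<in> tail n k"
    by (rule no_cycle_iff_in_tail) (use bounds no_cycle_if_bottom_and_after_sink_off_cycle in auto)
  moreover have "\<not> has_cycle n k \<longleftrightarrow> 0 \<in> tail n k \<and> k - 1 \<in> tail n k"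
    by (rule no_cycle_iff_in_tail) (use bounds no_cycle_if_bottom_and_top_off_cycle in auto)
  ultimately show ?thesis by blast
qed

end
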